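(* Let $d\ge2$ and $p\in[0,1]$. With systems $A'_1,A'_2,A_1,A_2,\tilde A,B$ (each $\mathbb{C}^d$), an arbitrary state $\rho_{\tilde AB}$, a POVM $\{M^{(i)}\}_{i=1}^K$ on $A_1A_2\tilde A$, unitaries $U^{(i,j)}_B$ ($j=1,2$), $\Omega=\psi^+_{A'_1A_1}\otimes\psi^+_{A'_2A_2}\otimes\rho_{\tilde AB}$, and $$F_j=\sum_{i=1}^{K}\operatorname{tr}\Big[\psi^+_{A'_jB}\,U^{(i,j)}_B\,\operatorname{tr}_{A_1A_2\tilde AA'_{\bar j}}\big[(M^{(i)}\otimes\mathbf 1)\,\Omega\big]\,U^{(i,j)\dagger}_B\Big]\quad(\bar j\ne j),$$ one has $$pF_1+(1-p)F_2\le\frac12\left(1+\sqrt{1+\frac{4(d^2-1)(p-1)p}{d^2}}\right).$$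
   Context: $\psi^+_{XY}$ denotes the maximally entangled state $|\psi^+\rangle\langle\psi^+|$ with $|\psi^+\rangle=\frac1{\sqrt d}\sum_{i=0}^{d-1}|ii\rangle$. This is the asymmetric constrained-entanglement random access code with two $d$-dimensional inputs, where Bob is asked for input 1 with probability $p$ and input 2 with probability $1-p$; $pF_1+(1-p)F_2$ is the success probability. *)

theory Defs
  imports Complex_Main
begin

text \<open>Finite-dimensional operators are represented by their matrix entries with
respect to the computational basis: an operator on a system with basis labels
in the finite set I is a function X :: 'i => 'i => complex (only entries with
indices in I matter).\<close>

type_synonym 'i op = "'i \<Rightarrow> 'i \<Rightarrow> complex"

definition mmul :: "'i set \<Rightarrow> 'i op \<Rightarrow> 'i op \<Rightarrow> 'i op" where
  "mmul I X Y = (\<lambda>x z. \<Sum>y\<in>I. X x y * Y y z)"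

definition adj :: "'i op \<Rightarrow> 'i op" where
  "adj X = (\<lambda>x y. cnj (X y x))"

definition idop :: "'i op" where
  "idop = (\<lambda>x y. if x = y then 1 else 0)"

definition trace :: "'i set \<Rightarrow> 'i op \<Rightarrow> complex" where
  "trace I X = (\<Sum>x\<in>I. X x x)"

definition psd :: "'i set \<Rightarrow> 'i op \<Rightarrow> bool" where
  "psd I X = (\<forall>v :: 'i \<Rightarrow> complex.
      Im (\<Sum>x\<in>I. \<Sum>y\<in>I. cnj (v x) * X x y * v y) = 0 \<and>
      Re (\<Sum>x\<in>I. \<Sum>y\<in>I. cnj (v x) * X x y * v y) \<ge> 0)"

definition is_state :: "'i set \<Rightarrow> 'i op \<Rightarrow> bool" where
  "is_state I \<rho> = (psd I \<rho> \<and> trace I \<rho> = 1)"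

definition unitary_op :: "'i set \<Rightarrow> 'i op \<Rightarrow> bool" where
  "unitary_op I U = (\<forall>x\<in>I. \<forall>y\<in>I. mmul I (adj U) U x y = idop x y \<and> mmul I U (adj U) x y = idop x y)"

text \<open>POVM with K outcomes M 0, ..., M (K-1) (the paper's M^(1..K)).\<close>
definition povm :: "'i set \<Rightarrow> nat \<Rightarrow> (nat \<Rightarrow> 'i op) \<Rightarrow> bool" where
  "povm I K M = ((\<forall>i<K. psd I (M i)) \<and> (\<forall>x\<in>I. \<forall>y\<in>I. (\<Sum>i<K. M i x y) = idop x y))"

abbreviation D :: "nat \<Rightarrow> nat set" where "D d \<equiv> {..<d}"

text \<open>Maximally entangled state psi+ on two copies of C^d:
  entries <ab|psi+><psi+|a'b'> = (1/d) [a=b][a'=b'].\<close>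
definition psi_plus :: "nat \<Rightarrow> (nat \<times> nat) op" where
  "psi_plus d = (\<lambda>(a, b) (a', b'). if a = b \<and> a' = b' then 1 / of_nat d else 0)"

text \<open>The six systems, ordered as (A'_1, A'_2, A_1, A_2, A~, B).\<close>
type_synonym idx6 = "nat \<times> nat \<times> nat \<times> nat \<times> nat \<times> nat"

definition Sys6 :: "nat \<Rightarrow> idx6 set" where
  "Sys6 d = D d \<times> D d \<times> D d \<times> D d \<times> D d \<times> D d"

text \<open>Omega = psi+_{A'_1 A_1} (x) psi+_{A'_2 A_2} (x) rho_{A~ B}; rho indexed by (A~, B).\<close>
definition Omega :: "nat \<Rightarrow> (nat \<times> nat) op \<Rightarrow> idx6 op" where
  "Omega d \<rho> = (\<lambda>(p1, p2, a1, a2, t, b) (q1, q2, c1, c2, s, e).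
      psi_plus d (p1, a1) (q1, c1) * psi_plus d (p2, a2) (q2, c2) * \<rho> (t, b) (s, e))"

text \<open>M (x) 1, with M acting on (A_1, A_2, A~) and identity on (A'_1, A'_2, B).\<close>
definition Mext :: "(nat \<times> nat \<times> nat) op \<Rightarrow> idx6 op" where
  "Mext M = (\<lambda>(p1, p2, a1, a2, t, b) (q1, q2, c1, c2, s, e).
      M (a1, a2, t) (c1, c2, s) * idop (p1, p2, b) (q1, q2, e))"

text \<open>Partial trace over A_1 A_2 A~ A'_{jbar}, leaving an operator on (A'_j, B).\<close>
definition reduce :: "nat \<Rightarrow> nat \<Rightarrow> idx6 op \<Rightarrow> (nat \<times> nat) op" where
  "reduce d j X = (\<lambda>(p, b) (q, e).
     if j = 1 then
       (\<Sum>r\<in>D d. \<Sum>a1\<in>D d. \<Sum>a2\<in>D d. \<Sum>t\<in>D d. X (p, r, a1, a2, t, b) (q, r, a1, a2, t, e))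
     else
       (\<Sum>r\<in>D d. \<Sum>a1\<in>D d. \<Sum>a2\<in>D d. \<Sum>t\<in>D d. X (r, p, a1, a2, t, b) (r, q, a1, a2, t, e)))"

text \<open>Conjugation of an operator on (A'_j, B) by a unitary acting on B:
  (1 (x) U) X (1 (x) U)^dagger.\<close>
definition conjB :: "nat \<Rightarrow> nat op \<Rightarrow> (nat \<times> nat) op \<Rightarrow> (nat \<times> nat) op" where
  "conjB d U X = (\<lambda>(p, b) (q, e).
     \<Sum>b'\<in>D d. \<Sum>e'\<in>D d. U b b' * X (p, b') (q, e') * cnj (U e e'))"

definition Fj :: "nat \<Rightarrow> (nat \<times> nat) op \<Rightarrow> nat \<Rightarrow> (nat \<Rightarrow> (nat \<times> nat \<times> nat) op)
                  \<Rightarrow> (nat \<Rightarrow> nat \<Rightarrow> nat op) \<Rightarrow> nat \<Rightarrow> complex" where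
  "Fj d \<rho> K M U j = (\<Sum>i<K. trace (D d \<times> D d)
      (mmul (D d \<times> D d) (psi_plus d)
         (conjB d (U i j) (reduce d j (mmul (Sys6 d) (Mext (M i)) (Omega d \<rho>))))))"

end

theory Submission
  imports Defs
begin

text \<open>Both success probabilities are linear in each POVM element: tracing out gives
  F_j = d^-3 \<Sum>_i \<langle>K_j, C_i\<rangle>, where C_i is M_i \<otimes> \<rho> contracted over the system \<tilde>A and
  K_j = d P_j for the projector P_j onto the states that Bob's unitary makes maximally entangled
  between B and the j-th system. Gram decompositions of M_i and \<rho> write each C_i as a sum of
  rank-one operators, so p F_1 + (1 - p) F_2 is at most d^-2 \<parallel>p P_1 + (1 - p) P_2\<parallel> \<Sum>_i tr C_i,
  and \<Sum>_i tr C_i = d^2. The ranges of P_1 and P_2 overlap by at most 1/d, that is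
  |\<langle>P_1 u, P_2 v\<rangle>| \<le> \<parallel>P_1 u\<parallel> \<parallel>P_2 v\<parallel> / d, and for two such projectors \<parallel>p P_1 + (1 - p) P_2\<parallel> is at
  most the larger root \<lambda> of (\<lambda> - p) (\<lambda> - 1 + p) = p (1 - p) / d^2, which is the claimed bound:
  expand \<parallel>w - x P_1 w - y P_2 w\<parallel>^2 \<ge> 0 at x = p / \<lambda>, y = (1 - p) / \<lambda>.\<close>

lemma sum_Times: "sum f (A \<times> B) = (\<Sum>a\<in>A. \<Sum>b\<in>B. f (a, b))"
  by (simp add: sum.cartesian_product)

lemma sum_nested5_Times:
  "(\<Sum>a\<in>S. \<Sum>b\<in>S. \<Sum>c\<in>S. \<Sum>e\<in>S. \<Sum>f\<in>S. g a b c e f) =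
   (\<Sum>(a, b, c, e, f)\<in>S \<times> S \<times> S \<times> S \<times> S. g a b c e f)"
  by (simp add: sum_Times)

lemma sum_rotate3: "(\<Sum>a\<in>A. \<Sum>b\<in>B. \<Sum>c\<in>C. f a b c) = (\<Sum>b\<in>B. \<Sum>c\<in>C. \<Sum>a\<in>A. f a b c)"
  by (subst sum.swap) (intro sum.cong refl sum.swap)

lemma if_zero_mult: "(if P then x else 0) * y = (if P then x * y else (0::complex))"
  "y * (if P then x else 0) = (if P then y * x else (0::complex))"
  by auto

lemma if_conj_zero: "(if P \<and> Q then x else (0::complex)) = (if P then (if Q then x else 0) else 0)"
  by auto

lemma sum_if_zero: "(\<Sum>y\<in>S. if P then g y else (0::complex)) = (if P then (\<Sum>y\<in>S. g y) else 0)"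
  by auto

lemma sum_mult_idop [simp]:
  "finite A \<Longrightarrow> i \<in> A \<Longrightarrow> (\<Sum>j\<in>A. f j * idop i j) = f i"
  by (simp add: idop_def if_distrib[of "times _"] cong: if_cong)

lemma sum_idop_mult:
  "finite A \<Longrightarrow> i \<in> A \<Longrightarrow> (\<Sum>j\<in>A. idop i j * f j) = f i"
  using sum_mult_idop[of A i f] by (simp add: mult.commute)

section \<open>Quadratic forms and Gram decompositions\<close>

definition qform :: "'i set \<Rightarrow> 'i op \<Rightarrow> ('i \<Rightarrow> complex) \<Rightarrow> complex" where
  "qform I X v = (\<Sum>x\<in>I. \<Sum>y\<in>I. cnj (v x) * X x y * v y)"

definition gram :: "'j set \<Rightarrow> ('j \<Rightarrow> 'i \<Rightarrow> complex) \<Rightarrow> 'i op" where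
  "gram J u = (\<lambda>x y. \<Sum>j\<in>J. u j x * cnj (u j y))"

lemma psd_iff_qform: "psd I X \<longleftrightarrow> (\<forall>v. Im (qform I X v) = 0 \<and> 0 \<le> Re (qform I X v))"
  unfolding psd_def qform_def ..

lemma psdD: "psd I X \<Longrightarrow> Im (qform I X v) = 0 \<and> 0 \<le> Re (qform I X v)"
  unfolding psd_iff_qform by blast

lemma sum_two_point:
  assumes "finite I" "x \<in> I" "y \<in> I"
  shows "(\<Sum>z\<in>I. g z * (a * idop x z + b * idop y z)) = g x * a + g y * b"
proof -
  have "(\<Sum>z\<in>I. g z * (a * idop x z + b * idop y z)) =
     (\<Sum>z\<in>I. if z = x then g z * a else 0) + (\<Sum>z\<in>I. if z = y then g z * b else 0)"
    unfolding sum.distrib[symmetric] by (rule sum.cong) (auto simp: idop_def ring_distribs)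
  also have "\<dots> = g x * a + g y * b" using assms by simp
  finally show ?thesis .
qed

lemma qform_two_point:
  assumes "finite I" "x \<in> I" "y \<in> I"
  shows "qform I X (\<lambda>z. a * idop x z + b * idop y z) =
     cnj a * a * X x x + cnj a * b * X x y + cnj b * a * X y x + cnj b * b * X y y"
proof -
  have conj: "cnj (a * idop x z + b * idop y z) = cnj a * idop x z + cnj b * idop y z" for z
    by (simp add: idop_def)
  have "qform I X (\<lambda>z. a * idop x z + b * idop y z) =
     (\<Sum>z\<in>I. (cnj a * idop x z + cnj b * idop y z) * (X z x * a + X z y * b))"
    unfolding qform_def conj
    by (intro sum.cong refl)
      (subst sum_two_point[OF assms, symmetric], simp add: sum_distrib_left mult.assoc)
  also have "\<dots> = (\<Sum>z\<in>I. (X z x * a + X z y * b) * (cnj a * idop x z + cnj b * idop y z))"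
    by (simp add: mult.commute)
  also have "\<dots> = cnj a * a * X x x + cnj a * b * X x y + cnj b * a * X y x + cnj b * b * X y y"
    by (subst sum_two_point[OF assms]) (simp add: algebra_simps)
  finally show ?thesis .
qed

lemma psd_diag:
  assumes "psd I X" "finite I" "x \<in> I"
  shows "Im (X x x) = 0" "0 \<le> Re (X x x)"
  using psdD[OF assms(1), of "\<lambda>z. 1 * idop x z + 0 * idop x z"]
    qform_two_point[OF assms(2,3,3), of X 1 0]
  by simp_all

lemma psd_hermitian:
  assumes "psd I X" "finite I" "x \<in> I" "y \<in> I"
  shows "X y x = cnj (X x y)"
proof -
  have "Im (X x x) = 0" "Im (X y y) = 0"
    using psd_diag(1) assms by metis+
  moreover have "Im (X x y) + Im (X y x) = 0" "Re (X x y) - Re (X y x) = 0"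
    using psdD[OF assms(1), of "\<lambda>z. 1 * idop x z + 1 * idop y z"]
      psdD[OF assms(1), of "\<lambda>z. 1 * idop x z + \<i> * idop y z"]
    unfolding qform_two_point[OF assms(2-4)] by (simp_all add: calculation)
  ultimately show ?thesis by (simp add: complex_eq_iff)
qed

lemma qform_insert:
  assumes "finite J" "a \<notin> J"
  shows "qform (insert a J) X v = qform J X v + cnj (v a) * (\<Sum>y\<in>J. X a y * v y)
     + (\<Sum>x\<in>J. cnj (v x) * X x a) * v a + cnj (v a) * X a a * v a"
  using assms by (simp add: qform_def sum.distrib sum_distrib_left sum_distrib_right algebra_simps)

lemma qform_fun_upd_outside: "a \<notin> J \<Longrightarrow> qform J X (v(a := t)) = qform J X v"
  unfolding qform_def by (intro sum.cong refl) auto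

lemma qform_restrict:
  assumes "finite J" "a \<notin> J"
  shows "qform (insert a J) X (v(a := 0)) = qform J X v"
  using qform_insert[OF assms] qform_fun_upd_outside[OF assms(2)] by simp

lemma psd_restrict:
  assumes "psd (insert a J) X" "finite J" "a \<notin> J"
  shows "psd J X"
  using assms(1) unfolding psd_iff_qform qform_restrict[OF assms(2,3), symmetric] by blast

lemma psd_zero_row:
  assumes "psd I X" "finite I" "a \<in> I" "y \<in> I" "X a a = 0"
  shows "X a y = 0"
proof (rule ccontr)
  assume nz: "X a y \<noteq> 0"
  define m where "m = (Re (X a y))\<^sup>2 + (Im (X a y))\<^sup>2"
  have "0 < m" using nz by (simp add: m_def complex_eq_iff sum_power2_gt_zero_iff)
  define s where "s = (Re (X y y) + 1) / (2 * m)"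
  define t where "t = - complex_of_real s * X a y"
  have "0 \<le> Re (qform I X (\<lambda>z. t * idop a z + 1 * idop y z))"
    using psdD[OF assms(1)] by blast
  also have "qform I X (\<lambda>z. t * idop a z + 1 * idop y z) = cnj t * X a y + t * cnj (X a y) + X y y"
    using qform_two_point[OF assms(2-4), of X t 1] assms(5) psd_hermitian[OF assms(1,2,3,4)] by simp
  also have "Re \<dots> = - 2 * s * m + Re (X y y)"
    by (simp add: t_def m_def power2_eq_square algebra_simps)
  also have "\<dots> = -1" using \<open>0 < m\<close> by (simp add: s_def field_simps)
  finally show False by simp
qed

text \<open>The Schur complement of a nonzero pivot: its form at \<open>v\<close> is the original form at \<open>v\<close>
  extended by the minimising value at \<open>a\<close>.\<close>
lemma psd_schur_complement:
  assumes psd: "psd (insert a J) X" and J: "finite J" "a \<notin> J" and pivot: "X a a \<noteq> 0"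
  shows "psd J (\<lambda>x y. X x y - X x a * X a y / X a a)"
  unfolding psd_iff_qform
proof
  fix v :: "_ \<Rightarrow> complex"
  have fin: "finite (insert a J)" using J by simp
  have herm: "X x a = cnj (X a x)" if "x \<in> J" for x
    using psd_hermitian[OF psd fin, of a x] that by simp
  have "Im (X a a) = 0" using psd_diag(1)[OF psd fin insertI1] .
  then have Xaa: "cnj (X a a) = X a a" by (simp add: complex_eq_iff)
  define S where "S = (\<Sum>y\<in>J. X a y * v y)"
  have S': "(\<Sum>x\<in>J. cnj (v x) * X x a) = cnj S"
    unfolding S_def cnj_sum by (intro sum.cong refl) (simp add: herm)
  define t where "t = - S / X a a"
  have "qform (insert a J) X (v(a := t)) = qform J X v + cnj t * S + cnj S * t + cnj t * X a a * t"
  proof -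
    have "(\<Sum>y\<in>J. X a y * (v(a := t)) y) = S"
      unfolding S_def using J(2) by (intro sum.cong refl) auto
    moreover have "(\<Sum>x\<in>J. cnj ((v(a := t)) x) * X x a) = cnj S"
      unfolding S'[symmetric] using J(2) by (intro sum.cong refl) auto
    ultimately show ?thesis
      using qform_insert[OF J, of X "v(a := t)"] qform_fun_upd_outside[OF J(2)] by simp
  qed
  also have "\<dots> = qform J X v - cnj S * S / X a a"
    using pivot Xaa by (simp add: t_def field_simps)
  also have "\<dots> = qform J (\<lambda>x y. X x y - X x a * X a y / X a a) v"
  proof -
    have "qform J (\<lambda>x y. X x y - X x a * X a y / X a a) v
        = qform J X v - (\<Sum>x\<in>J. cnj (v x) * X x a) * S / X a a"
      unfolding qform_def S_def
      by (simp add: sum_subtractf right_diff_distrib left_diff_distrib sum_distrib_left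
          sum_distrib_right sum_divide_distrib mult_ac)
    then show ?thesis unfolding S' by simp
  qed
  finally show "Im (qform J (\<lambda>x y. X x y - X x a * X a y / X a a) v) = 0 \<and>
      0 \<le> Re (qform J (\<lambda>x y. X x y - X x a * X a y / X a a) v)"
    using psdD[OF psd, of "v(a := t)"] by simp
qed

lemma psd_gram_decomposition:
  assumes "finite I" "psd I X"
  shows "\<exists>(n :: nat) u. \<forall>x\<in>I. \<forall>y\<in>I. X x y = gram {..<n} u x y"
  using assms
proof (induction I arbitrary: X rule: finite_induct)
  case empty
  then show ?case by auto
next
  case (insert a J)
  have fin: "finite (insert a J)" and aI: "a \<in> insert a J" using insert by auto
  have herm: "\<And>x y. x \<in> insert a J \<Longrightarrow> y \<in> insert a J \<Longrightarrow> X y x = cnj (X x y)"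
    using psd_hermitian[OF insert.prems fin] by blast
  show ?case
  proof (cases "X a a = 0")
    case True
    have row: "X a y = 0" "X y a = 0" if "y \<in> insert a J" for y
      using psd_zero_row[OF insert.prems fin aI that True] herm[OF aI that] by auto
    obtain n :: nat and u where u: "\<forall>x\<in>J. \<forall>y\<in>J. X x y = gram {..<n} u x y"
      using insert.IH[OF psd_restrict[OF insert.prems insert.hyps]] by blast
    have "X x y = gram {..<n} (\<lambda>k. (u k)(a := 0)) x y" if "x \<in> insert a J" "y \<in> insert a J" for x y
      using that u row insert.hyps(2) by (cases "x = a \<or> y = a") (auto simp: gram_def)
    then show ?thesis by blast
  next
    case False
    define c where "c = Re (X a a)"
    have Xaa: "X a a = complex_of_real c" and "0 < c"
      using psd_diag[OF insert.prems fin aI] False by (auto simp: c_def complex_eq_iff)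
    obtain n :: nat and u where u: "\<forall>x\<in>J. \<forall>y\<in>J. X x y - X x a * X a y / X a a = gram {..<n} u x y"
      using insert.IH[OF psd_schur_complement[OF insert.prems insert.hyps False]] by blast
    define u0 where "u0 = (\<lambda>x. X x a / complex_of_real (sqrt c))"
    have u0: "u0 x * cnj (u0 y) = X x a * X a y / X a a" if "y \<in> insert a J" for x y
    proof -
      have "complex_of_real (sqrt c) * complex_of_real (sqrt c) = X a a"
        using \<open>0 < c\<close> Xaa by (simp flip: of_real_mult)
      then show ?thesis using herm[OF that aI] by (simp add: u0_def)
    qed
    define u' where "u' = (\<lambda>k. if k < n then (u k)(a := 0) else u0)"
    have "X x y = gram {..<Suc n} u' x y" if "x \<in> insert a J" "y \<in> insert a J" for x y
    proof -
      have "gram {..<Suc n} u' x y = gram {..<n} (\<lambda>k. (u k)(a := 0)) x y + u0 x * cnj (u0 y)"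
        by (simp add: gram_def u'_def)
      also have "\<dots> = X x y"
      proof (cases "x = a \<or> y = a")
        case True
        then show ?thesis using u0[OF that(2)] Xaa \<open>0 < c\<close> by (auto simp: gram_def)
      next
        case False
        with that u have "X x y - X x a * X a y / X a a = gram {..<n} u x y" by auto
        then show ?thesis using u0[OF that(2)] False by (simp add: gram_def algebra_simps)
      qed
      finally show ?thesis by simp
    qed
    then show ?thesis by blast
  qed
qed

lemma qform_lincomb:
  "qform I (\<lambda>x y. a * K x y + b * K' x y) v = a * qform I K v + b * qform I K' v"
  unfolding qform_def by (simp add: sum.distrib sum_distrib_left ring_distribs mult_ac)

definition cinner :: "'i set \<Rightarrow> ('i \<Rightarrow> complex) \<Rightarrow> ('i \<Rightarrow> complex) \<Rightarrow> complex" where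
  "cinner I u v = (\<Sum>x\<in>I. cnj (u x) * v x)"

lemma qform_idop:
  assumes "finite I"
  shows "qform I idop v = cinner I v v"
  unfolding qform_def cinner_def
proof (intro sum.cong refl)
  fix x assume "x \<in> I"
  show "(\<Sum>y\<in>I. cnj (v x) * idop x y * v y) = cnj (v x) * v x"
    using sum_mult_idop[OF assms \<open>x \<in> I\<close>, of "\<lambda>y. cnj (v x) * v y"] by (simp add: mult_ac)
qed

lemma Re_cinner_self_nonneg: "0 \<le> Re (cinner I v v)"
  unfolding cinner_def Re_sum by (intro sum_nonneg) simp

lemma Re_cinner_real_comb:
  fixes x y :: real and u v w :: "'i \<Rightarrow> complex"
  shows "Re (cinner I (\<lambda>i. w i - (x * u i + y * v i)) (\<lambda>i. w i - (x * u i + y * v i))) =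
    Re (cinner I w w) - 2 * x * Re (cinner I u w) - 2 * y * Re (cinner I v w)
    + x\<^sup>2 * Re (cinner I u u) + y\<^sup>2 * Re (cinner I v v) + 2 * x * y * Re (cinner I u v)"
proof -
  have "Re (cinner I (\<lambda>i. w i - (x * u i + y * v i)) (\<lambda>i. w i - (x * u i + y * v i))) =
    (\<Sum>i\<in>I. Re (cnj (w i) * w i) - 2 * x * Re (cnj (u i) * w i) - 2 * y * Re (cnj (v i) * w i)
      + x\<^sup>2 * Re (cnj (u i) * u i) + y\<^sup>2 * Re (cnj (v i) * v i) + 2 * x * y * Re (cnj (u i) * v i))"
    unfolding cinner_def Re_sum by (intro sum.cong refl) (simp add: algebra_simps power2_eq_square)
  also have "\<dots> = Re (cinner I w w) - 2 * x * Re (cinner I u w) - 2 * y * Re (cinner I v w)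
    + x\<^sup>2 * Re (cinner I u u) + y\<^sup>2 * Re (cinner I v v) + 2 * x * y * Re (cinner I u v)"
    unfolding cinner_def Re_sum by (simp only: sum.distrib sum_subtractf sum_distrib_left)
  finally show ?thesis .
qed

lemma Re_cinner_le_amgm:
  assumes "0 < t"
  shows "2 * Re (cinner I f g) \<le> t * Re (cinner I f f) + Re (cinner I g g) / t"
proof -
  have "2 * Re (cnj (f x) * g x) \<le> t * Re (cnj (f x) * f x) + Re (cnj (g x) * g x) / t" for x
  proof -
    have "0 \<le> ((t * Re (f x) - Re (g x))\<^sup>2 + (t * Im (f x) - Im (g x))\<^sup>2) / t"
      using assms by simp
    also have "\<dots> = t * Re (cnj (f x) * f x) + Re (cnj (g x) * g x) / t - 2 * Re (cnj (f x) * g x)"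
      using assms by (simp add: field_simps power2_eq_square)
    finally show ?thesis by simp
  qed
  then show ?thesis
    unfolding cinner_def Re_sum
    by (simp add: sum_distrib_left sum_divide_distrib sum.distrib[symmetric] sum_mono)
qed

lemma cinner_orthonormal_cols:
  assumes "\<forall>i<d. \<forall>j<d. (\<Sum>k<d. cnj (Q k i) * Q k j) = idop i j"
  shows "cinner (D d) (\<lambda>k. \<Sum>i<d. Q k i * x i) (\<lambda>k. \<Sum>i<d. Q k i * x i) = cinner (D d) x x"
proof -
  have "cinner (D d) (\<lambda>k. \<Sum>i<d. Q k i * x i) (\<lambda>k. \<Sum>i<d. Q k i * x i) =
      (\<Sum>k<d. \<Sum>i<d. \<Sum>j<d. cnj (x i) * x j * (cnj (Q k i) * Q k j))"
    unfolding cinner_def by (simp add: cnj_sum sum_distrib_left sum_distrib_right mult_ac)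
  also have "\<dots> = (\<Sum>i<d. \<Sum>j<d. cnj (x i) * x j * (\<Sum>k<d. cnj (Q k i) * Q k j))"
    by (subst sum_rotate3) (simp add: sum_distrib_left)
  also have "\<dots> = (\<Sum>i<d. \<Sum>j<d. cnj (x i) * x j * idop i j)"
    using assms by (intro sum.cong refl) simp
  also have "\<dots> = cinner (D d) x x"
    by (simp add: cinner_def)
  finally show ?thesis .
qed

section \<open>Two projections with small overlap\<close>

definition mix_bound :: "real \<Rightarrow> real \<Rightarrow> real" where
  "mix_bound p c = (1 + sqrt (1 - 4 * p * (1 - p) * (1 - c\<^sup>2))) / 2"

lemma mix_bound_gt_and_root:
  assumes "0 < p" "p < 1" "0 < c"
  shows "p < mix_bound p c" "1 - p < mix_bound p c"
    and "(mix_bound p c - p) * (mix_bound p c - (1 - p)) = p * (1 - p) * c\<^sup>2"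
proof -
  define \<Delta> where "\<Delta> = 1 - 4 * p * (1 - p) * (1 - c\<^sup>2)"
  have \<Delta>: "\<Delta> = (2 * p - 1)\<^sup>2 + 4 * p * (1 - p) * c\<^sup>2"
    unfolding \<Delta>_def by (simp add: algebra_simps power2_eq_square)
  have "(2 * p - 1)\<^sup>2 < \<Delta>"
    unfolding \<Delta> using assms by (simp add: mult_pos_pos)
  then have "\<bar>2 * p - 1\<bar> < sqrt \<Delta>"
    using real_sqrt_abs real_sqrt_less_mono by metis
  then show "p < mix_bound p c" "1 - p < mix_bound p c"
    unfolding mix_bound_def \<Delta>_def[symmetric] by (auto simp: abs_if split: if_splits)
  have "sqrt \<Delta> ^ 2 = \<Delta>"
    using \<open>(2 * p - 1)\<^sup>2 < \<Delta>\<close> by (smt (verit) real_sqrt_pow2 zero_le_power2)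
  then show "(mix_bound p c - p) * (mix_bound p c - (1 - p)) = p * (1 - p) * c\<^sup>2"
    unfolding mix_bound_def \<Delta>_def[symmetric] \<Delta> by (simp add: field_simps power2_eq_square)
qed

text \<open>Intended reading: \<open>N = \<parallel>w\<parallel>\<^sup>2\<close>, \<open>a = \<parallel>Pw\<parallel>\<^sup>2\<close>, \<open>b = \<parallel>Qw\<parallel>\<^sup>2\<close> and \<open>r = Re \<langle>Pw, Qw\<rangle>\<close>
  for orthogonal projections \<open>P\<close>, \<open>Q\<close> whose ranges have overlap at most \<open>c\<close>; the first
  hypothesis is \<open>\<parallel>w - xPw - yQw\<parallel>\<^sup>2 \<ge> 0\<close>.\<close>
lemma weighted_projections_le:
  fixes p c N a b r :: real
  assumes p: "0 \<le> p" "p \<le> 1" and c: "0 < c"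
    and quad: "\<And>x y. 0 \<le> N - 2 * x * a - 2 * y * b + x\<^sup>2 * a + y\<^sup>2 * b + 2 * x * y * r"
    and cross: "\<And>t. 0 < t \<Longrightarrow> 2 * r \<le> c * (t * a + b / t)"
  shows "p * a + (1 - p) * b \<le> mix_bound p c * N"
proof (cases "p = 0 \<or> p = 1")
  case True
  then show ?thesis
    using quad[of 0 1] quad[of 1 0] by (auto simp: mix_bound_def)
next
  case False
  with p have p': "0 < p" "p < 1" by auto
  define L where "L = mix_bound p c"
  have L: "p < L" "1 - p < L" "(L - p) * (L - (1 - p)) = p * (1 - p) * c\<^sup>2"
    using mix_bound_gt_and_root[OF p' c] unfolding L_def by auto
  have "0 < L" using L p' by linarith
  \<comment> \<open>the AM-GM weight for which the root identity of \<open>L\<close> absorbs the cross term\<close>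
  define t where "t = (L - p) / ((1 - p) * c)"
  have "0 < t" unfolding t_def using L p' c by simp
  have "p * (1 - p) * (2 * r) \<le> p * (1 - p) * (c * (t * a + b / t))"
    using cross[OF \<open>0 < t\<close>] p' by (simp add: mult_left_mono)
  also have "\<dots> = (p * (1 - p) * c * t) * a + (p * (1 - p) * c / t) * b"
    by (simp add: algebra_simps)
  also have "p * (1 - p) * c * t = p * (L - p)"
    unfolding t_def using p' c by (simp add: field_simps)
  also have "p * (1 - p) * c / t = (1 - p) * (p * (1 - p) * c\<^sup>2) / (L - p)"
    unfolding t_def using p' c L by (simp add: field_simps power2_eq_square)
  also have "\<dots> = (1 - p) * (L - (1 - p))"
    using L(1) unfolding L(3)[symmetric] by simp
  finally have "p * (1 - p) * (2 * r) \<le> p * (L - p) * a + (1 - p) * (L - (1 - p)) * b" .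
  then have "(p\<^sup>2 * a + (1 - p)\<^sup>2 * b + 2 * p * (1 - p) * r) / L \<le> p * a + (1 - p) * b"
    using \<open>0 < L\<close> by (simp add: field_simps power2_eq_square)
  moreover have
    "0 \<le> L * N - 2 * p * a - 2 * (1 - p) * b + (p\<^sup>2 * a + (1 - p)\<^sup>2 * b + 2 * p * (1 - p) * r) / L"
  proof -
    have "L * N - 2 * p * a - 2 * (1 - p) * b + (p\<^sup>2 * a + (1 - p)\<^sup>2 * b + 2 * p * (1 - p) * r) / L
      = L * (N - 2 * (p / L) * a - 2 * ((1 - p) / L) * b + (p / L)\<^sup>2 * a + ((1 - p) / L)\<^sup>2 * b
          + 2 * (p / L) * ((1 - p) / L) * r)"
      using \<open>0 < L\<close> by (simp add: field_simps power2_eq_square)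
    then show ?thesis
      using quad[of "p / L" "(1 - p) / L"] \<open>0 < L\<close> by simp
  qed
  ultimately show ?thesis
    unfolding L_def by linarith
qed

lemma mix_bound_inverse:
  assumes "0 < d"
  shows "mix_bound p (1 / real d) =
    1 / 2 * (1 + sqrt (1 + 4 * (real d ^ 2 - 1) * (p - 1) * p / real d ^ 2))"
proof -
  have "1 - 4 * p * (1 - p) * (1 - (1 / real d)\<^sup>2) =
      1 + 4 * (real d ^ 2 - 1) * (p - 1) * p / real d ^ 2"
    using assms by (simp add: field_simps power2_eq_square)
  then show ?thesis unfolding mix_bound_def by simp
qed

section \<open>Bob's success kernels\<close>

lemma unitary_sum_norm:
  assumes "unitary_op (D d) W"
  shows "(\<Sum>x<d. \<Sum>b<d. cnj (W x b) * W x b) = of_nat d"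
proof -
  have "(\<Sum>b<d. cnj (W x b) * W x b) = 1" if "x < d" for x
    using assms that unfolding unitary_op_def mmul_def adj_def idop_def by (auto simp: mult.commute)
  then show ?thesis by simp
qed

lemma unitary_orthonormal_conj_cols:
  assumes "unitary_op (D d) V"
  shows "\<forall>i<d. \<forall>j<d. (\<Sum>k<d. cnj (cnj (V k i)) * cnj (V k j)) = idop i j"
proof (intro allI impI)
  fix i j assume "i < d" "j < d"
  then have "mmul (D d) (adj V) V j i = idop j i" using assms unfolding unitary_op_def by auto
  then show "(\<Sum>k<d. cnj (cnj (V k i)) * cnj (V k j)) = idop i j"
    unfolding mmul_def adj_def by (simp add: mult.commute idop_def split: if_splits)
qed

lemma unitary_orthonormal_transpose_cols:
  assumes "unitary_op (D d) U"
  shows "\<forall>i<d. \<forall>j<d. (\<Sum>k<d. cnj (U i k) * U j k) = idop i j"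
proof (intro allI impI)
  fix i j assume "i < d" "j < d"
  then have "mmul (D d) U (adj U) j i = idop j i" using assms unfolding unitary_op_def by auto
  then show "(\<Sum>k<d. cnj (U i k) * U j k) = idop i j"
    unfolding mmul_def adj_def by (simp add: mult.commute idop_def split: if_splits)
qed

lemma cinner_unitary_transfer:
  assumes "unitary_op (D d) U" "unitary_op (D d) V"
  shows "cinner (D d) (\<lambda>x2. \<Sum>b<d. cnj (V x2 b) * (\<Sum>x1<d. U x1 b * g x1))
      (\<lambda>x2. \<Sum>b<d. cnj (V x2 b) * (\<Sum>x1<d. U x1 b * g x1)) = cinner (D d) g g"
  using cinner_orthonormal_cols[OF unitary_orthonormal_conj_cols[OF assms(2)]]
    cinner_orthonormal_cols[OF unitary_orthonormal_transpose_cols[OF assms(1)]]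
  by simp

abbreviation D3 :: "nat \<Rightarrow> (nat \<times> nat \<times> nat) set" where
  "D3 d \<equiv> D d \<times> D d \<times> D d"

text \<open>\<open>success_kernel1 W\<close> is \<open>d\<close> times the projector onto the span of the vectors
  \<open>(x1, x2, b) \<mapsto> cnj (W x1 b) * f x2\<close>, the states that Bob's correction \<open>W\<close> maps to
  \<open>\<psi>\<^sup>+\<close> on the first system and \<open>B\<close>; \<open>success_kernel2\<close> is the same for the second system.\<close>
definition success_kernel1 :: "nat op \<Rightarrow> (nat \<times> nat \<times> nat) op" where
  "success_kernel1 W = (\<lambda>(x1, x2, b) (y1, y2, e). if x2 = y2 then cnj (W x1 b) * W y1 e else 0)"

definition success_kernel2 :: "nat op \<Rightarrow> (nat \<times> nat \<times> nat) op" where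
  "success_kernel2 W = (\<lambda>(x1, x2, b) (y1, y2, e). if x1 = y1 then cnj (W x2 b) * W y2 e else 0)"

definition overlap1 :: "nat \<Rightarrow> nat op \<Rightarrow> (nat \<times> nat \<times> nat \<Rightarrow> complex) \<Rightarrow> nat \<Rightarrow> complex" where
  "overlap1 d W v x2 = (\<Sum>x1<d. \<Sum>b<d. W x1 b * v (x1, x2, b))"

definition overlap2 :: "nat \<Rightarrow> nat op \<Rightarrow> (nat \<times> nat \<times> nat \<Rightarrow> complex) \<Rightarrow> nat \<Rightarrow> complex" where
  "overlap2 d W v x1 = (\<Sum>x2<d. \<Sum>b<d. W x2 b * v (x1, x2, b))"

lemma qform_success_kernel1:
  "qform (D3 d) (success_kernel1 W) v = cinner (D d) (overlap1 d W v) (overlap1 d W v)"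
proof -
  have "qform (D3 d) (success_kernel1 W) v =
    (\<Sum>x1<d. \<Sum>x2<d. \<Sum>b<d. \<Sum>y1<d. \<Sum>e<d.
      W y1 e * (cnj (W x1 b) * (v (y1, x2, e) * cnj (v (x1, x2, b)))))"
    by (simp add: qform_def success_kernel1_def sum_Times if_zero_mult sum_if_zero sum.delta
        sum.delta' mult_ac)
  also have "\<dots> =
    (\<Sum>x2<d. \<Sum>x1<d. \<Sum>y1<d. \<Sum>b<d. \<Sum>e<d.
      W y1 e * (cnj (W x1 b) * (v (y1, x2, e) * cnj (v (x1, x2, b)))))"
    by (subst sum.swap) (intro sum.cong refl sum.swap)
  also have "\<dots> = cinner (D d) (overlap1 d W v) (overlap1 d W v)"
    unfolding cinner_def overlap1_def
    by (simp add: cnj_sum sum_distrib_left sum_distrib_right mult_ac)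
  finally show ?thesis .
qed

lemma qform_success_kernel2:
  "qform (D3 d) (success_kernel2 W) v = cinner (D d) (overlap2 d W v) (overlap2 d W v)"
proof -
  have "qform (D3 d) (success_kernel2 W) v =
    (\<Sum>x1<d. \<Sum>x2<d. \<Sum>b<d. \<Sum>y2<d. \<Sum>e<d.
      W y2 e * (cnj (W x2 b) * (v (x1, y2, e) * cnj (v (x1, x2, b)))))"
    by (simp add: qform_def success_kernel2_def sum_Times if_zero_mult sum_if_zero sum.delta
        sum.delta' mult_ac)
  also have "\<dots> =
    (\<Sum>x1<d. \<Sum>x2<d. \<Sum>y2<d. \<Sum>b<d. \<Sum>e<d.
      W y2 e * (cnj (W x2 b) * (v (x1, y2, e) * cnj (v (x1, x2, b)))))"
    by (intro sum.cong refl sum.swap)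
  also have "\<dots> = cinner (D d) (overlap2 d W v) (overlap2 d W v)"
    unfolding cinner_def overlap2_def
    by (simp add: cnj_sum sum_distrib_left sum_distrib_right mult_ac)
  finally show ?thesis .
qed

lemma cinner_lift1:
  "cinner (D3 d) (\<lambda>(x1, x2, b). f x2 * cnj (W x1 b)) v = cinner (D d) f (overlap1 d W v)"
  unfolding cinner_def overlap1_def sum_Times
  by (subst sum.swap) (simp add: sum_distrib_left mult_ac)

lemma cinner_lift2:
  "cinner (D3 d) (\<lambda>(x1, x2, b). g x1 * cnj (W x2 b)) v = cinner (D d) g (overlap2 d W v)"
  unfolding cinner_def overlap2_def
  by (simp add: sum_Times sum_distrib_left mult_ac)

lemma cinner_lift1_self:
  assumes "unitary_op (D d) W"
  shows "cinner (D3 d) (\<lambda>(x1, x2, b). f x2 * cnj (W x1 b)) (\<lambda>(x1, x2, b). f x2 * cnj (W x1 b)) =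
    of_nat d * cinner (D d) f f"
proof -
  have "cinner (D3 d) (\<lambda>(x1, x2, b). f x2 * cnj (W x1 b)) (\<lambda>(x1, x2, b). f x2 * cnj (W x1 b)) =
      (\<Sum>x1<d. \<Sum>b<d. cnj (W x1 b) * W x1 b) * cinner (D d) f f"
    unfolding cinner_def sum_Times
    by (simp add: sum_distrib_left sum_distrib_right mult_ac) (intro sum.cong refl sum.swap)
  then show ?thesis using unitary_sum_norm[OF assms] by simp
qed

lemma cinner_lift2_self:
  assumes "unitary_op (D d) W"
  shows "cinner (D3 d) (\<lambda>(x1, x2, b). g x1 * cnj (W x2 b)) (\<lambda>(x1, x2, b). g x1 * cnj (W x2 b)) =
    of_nat d * cinner (D d) g g"
proof -
  have "cinner (D3 d) (\<lambda>(x1, x2, b). g x1 * cnj (W x2 b)) (\<lambda>(x1, x2, b). g x1 * cnj (W x2 b)) =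
      (\<Sum>x2<d. \<Sum>b<d. cnj (W x2 b) * W x2 b) * cinner (D d) g g"
    unfolding cinner_def sum_Times
    by (subst sum_rotate3) (simp add: sum_distrib_left sum_distrib_right mult_ac)
  then show ?thesis using unitary_sum_norm[OF assms] by simp
qed

lemma cinner_lift1_lift2:
  "cinner (D3 d) (\<lambda>(x1, x2, b). f x2 * cnj (U x1 b)) (\<lambda>(x1, x2, b). g x1 * cnj (V x2 b)) =
    cinner (D d) f (\<lambda>x2. \<Sum>b<d. cnj (V x2 b) * (\<Sum>x1<d. U x1 b * g x1))"
  unfolding cinner_def sum_Times
  by (subst sum_rotate3) (simp add: sum_distrib_left mult_ac)

lemma overlap_mix_le:
  assumes d: "0 < d" and p: "0 \<le> p" "p \<le> 1"
    and U: "unitary_op (D d) U" and V: "unitary_op (D d) V"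
  shows "p * Re (cinner (D d) (overlap1 d U v) (overlap1 d U v))
      + (1 - p) * Re (cinner (D d) (overlap2 d V v) (overlap2 d V v))
    \<le> mix_bound p (1 / d) * d * Re (cinner (D3 d) v v)"
proof -
  define \<alpha> where "\<alpha> = overlap1 d U v"
  define \<beta> where "\<beta> = overlap2 d V v"
  define \<gamma> where "\<gamma> = (\<lambda>x2. \<Sum>b<d. cnj (V x2 b) * (\<Sum>x1<d. U x1 b * \<beta> x1))"
  \<comment> \<open>\<open>u\<close>, \<open>u'\<close> are the projections of \<open>v\<close> onto the two success subspaces; their overlap is
    \<open>\<langle>\<alpha>, \<gamma>\<rangle> / d\<^sup>2\<close> with \<open>\<parallel>\<gamma>\<parallel> = \<parallel>\<beta>\<parallel>\<close>.\<close>
  define u where "u = (\<lambda>(x1, x2, b). \<alpha> x2 / d * cnj (U x1 b))"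
  define u' where "u' = (\<lambda>(x1, x2, b). \<beta> x1 / d * cnj (V x2 b))"
  have uv: "cinner (D3 d) u v = cinner (D d) \<alpha> \<alpha> / d"
    unfolding u_def cinner_lift1 \<alpha>_def[symmetric] by (simp add: cinner_def sum_divide_distrib)
  have uu: "cinner (D3 d) u u = cinner (D d) \<alpha> \<alpha> / d"
    unfolding u_def cinner_lift1_self[OF U] using d
    by (simp add: cinner_def sum_divide_distrib sum_distrib_left power2_eq_square)
  have u'v: "cinner (D3 d) u' v = cinner (D d) \<beta> \<beta> / d"
    unfolding u'_def cinner_lift2 \<beta>_def[symmetric] by (simp add: cinner_def sum_divide_distrib)
  have u'u': "cinner (D3 d) u' u' = cinner (D d) \<beta> \<beta> / d"
    unfolding u'_def cinner_lift2_self[OF V] using d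
    by (simp add: cinner_def sum_divide_distrib sum_distrib_left power2_eq_square)
  have uu': "cinner (D3 d) u u' = cinner (D d) \<alpha> \<gamma> / d\<^sup>2"
    unfolding u_def u'_def cinner_lift1_lift2 \<gamma>_def
    by (simp add: cinner_def sum_divide_distrib sum_distrib_left power2_eq_square mult_ac)
  have \<gamma>\<gamma>: "cinner (D d) \<gamma> \<gamma> = cinner (D d) \<beta> \<beta>"
    unfolding \<gamma>_def by (rule cinner_unitary_transfer[OF U V])
  have "p * (Re (cinner (D d) \<alpha> \<alpha>) / d) + (1 - p) * (Re (cinner (D d) \<beta> \<beta>) / d)
      \<le> mix_bound p (1 / d) * Re (cinner (D3 d) v v)"
  proof (rule weighted_projections_le[OF p])
    show "0 < 1 / real d" using d by simp
    show "0 \<le> Re (cinner (D3 d) v v) - 2 * x * (Re (cinner (D d) \<alpha> \<alpha>) / d)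
        - 2 * y * (Re (cinner (D d) \<beta> \<beta>) / d) + x\<^sup>2 * (Re (cinner (D d) \<alpha> \<alpha>) / d)
        + y\<^sup>2 * (Re (cinner (D d) \<beta> \<beta>) / d)
        + 2 * x * y * (Re (cinner (D d) \<alpha> \<gamma>) / (real d)\<^sup>2)" for x y
      using Re_cinner_self_nonneg[of "D3 d" "\<lambda>i. v i - (x * u i + y * u' i)"]
      by (simp only: Re_cinner_real_comb uv uu u'v u'u' uu') (simp add: power2_eq_square)
    show "2 * (Re (cinner (D d) \<alpha> \<gamma>) / (real d)\<^sup>2)
        \<le> 1 / real d * (t * (Re (cinner (D d) \<alpha> \<alpha>) / real d) + Re (cinner (D d) \<beta> \<beta>) / real d / t)"
      if "0 < t" for t
      using Re_cinner_le_amgm[OF that, of "D d" \<alpha> \<gamma>] d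
      unfolding \<gamma>\<gamma> by (simp add: field_simps power2_eq_square)
  qed
  then show ?thesis
    using d unfolding \<alpha>_def \<beta>_def by (simp add: field_simps)
qed

definition mix_kernel :: "real \<Rightarrow> nat op \<Rightarrow> nat op \<Rightarrow> (nat \<times> nat \<times> nat) op" where
  "mix_kernel p U V =
    (\<lambda>x y. of_real p * success_kernel1 U x y + of_real (1 - p) * success_kernel2 V x y)"

lemma qform_mix_kernel_le:
  assumes "0 < d" "0 \<le> p" "p \<le> 1" "unitary_op (D d) U" "unitary_op (D d) V"
  shows "Re (qform (D3 d) (mix_kernel p U V) v) \<le> mix_bound p (1 / d) * d * Re (cinner (D3 d) v v)"
  using overlap_mix_le[OF assms, of v]
  by (simp add: mix_kernel_def qform_lincomb qform_success_kernel1 qform_success_kernel2)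

definition pairing :: "'i set \<Rightarrow> 'i op \<Rightarrow> 'i op \<Rightarrow> complex" where
  "pairing I K N = (\<Sum>x\<in>I. \<Sum>y\<in>I. K x y * N x y)"

lemma pairing_lincomb:
  "pairing I (\<lambda>x y. a * K x y + b * K' x y) N = a * pairing I K N + b * pairing I K' N"
  unfolding pairing_def by (simp add: sum.distrib sum_distrib_left ring_distribs mult.assoc)

lemma pairing_idop: "finite I \<Longrightarrow> pairing I idop N = trace I N"
  unfolding pairing_def trace_def by (simp add: mult.commute[of "idop _ _"])

lemma pairing_gram_cnj: "pairing I K (gram J (\<lambda>j x. cnj (w j x))) = (\<Sum>j\<in>J. qform I K (w j))"
  unfolding pairing_def gram_def qform_def
  by (subst sum_rotate3) (simp add: sum_distrib_left mult_ac)

lemma pairing_le_trace: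
  assumes I: "finite I" and N: "\<forall>x\<in>I. \<forall>y\<in>I. N x y = gram J (\<lambda>j x. cnj (w j x)) x y"
    and K: "\<And>v. Re (qform I K v) \<le> c * Re (cinner I v v)"
  shows "Re (pairing I K N) \<le> c * Re (trace I N)"
proof -
  have gram: "pairing I K' N = (\<Sum>j\<in>J. qform I K' (w j))" for K'
    unfolding pairing_gram_cnj[symmetric] pairing_def using N by (intro sum.cong refl) auto
  have "Re (pairing I K N) \<le> (\<Sum>j\<in>J. c * Re (cinner I (w j) (w j)))"
    unfolding gram Re_sum by (intro sum_mono K)
  also have "\<dots> = c * Re (pairing I idop N)"
    unfolding gram Re_sum qform_idop[OF I] by (simp add: sum_distrib_left)
  finally show ?thesis unfolding pairing_idop[OF I] .
qed

text \<open>\<open>M \<otimes> \<rho>\<close> contracted over \<open>\<tilde>A\<close>; the remaining indices \<open>(x1, x2, b)\<close> belong to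
  \<open>A'\<^sub>1 A'\<^sub>2 B\<close>, which \<open>\<Omega>\<close> identifies with \<open>A\<^sub>1 A\<^sub>2 B\<close>.\<close>
definition contract :: "nat \<Rightarrow> (nat \<times> nat \<times> nat) op \<Rightarrow> (nat \<times> nat) op \<Rightarrow> (nat \<times> nat \<times> nat) op" where
  "contract d M \<rho> =
    (\<lambda>(x1, x2, b) (y1, y2, e). \<Sum>t<d. \<Sum>s<d. M (x1, x2, t) (y1, y2, s) * \<rho> (s, e) (t, b))"

definition partial_inner :: "nat \<Rightarrow> (nat \<times> nat \<times> nat \<Rightarrow> complex) \<Rightarrow> (nat \<times> nat \<Rightarrow> complex)
    \<Rightarrow> nat \<times> nat \<times> nat \<Rightarrow> complex" where
  "partial_inner d m r = (\<lambda>(x1, x2, b). \<Sum>s<d. cnj (m (x1, x2, s)) * r (s, b))"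

lemma contract_gram:
  assumes M: "\<forall>x\<in>D3 d. \<forall>y\<in>D3 d. M x y = gram J m x y"
    and \<rho>: "\<forall>x\<in>D d \<times> D d. \<forall>y\<in>D d \<times> D d. \<rho> x y = gram L r x y"
    and x: "x \<in> D3 d" and y: "y \<in> D3 d"
  shows "contract d M \<rho> x y =
    gram (J \<times> L) (\<lambda>jl z. cnj (partial_inner d (m (fst jl)) (r (snd jl)) z)) x y"
proof -
  obtain x1 x2 b y1 y2 e where xy: "x = (x1, x2, b)" "y = (y1, y2, e)" by (cases x, cases y) auto
  have "contract d M \<rho> x y = (\<Sum>(t, s)\<in>D d \<times> D d. \<Sum>(j, l)\<in>J \<times> L.
      m j (x1, x2, t) * cnj (r l (t, b)) * (cnj (m j (y1, y2, s)) * r l (s, e)))"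
    using M \<rho> x y unfolding xy
    by (simp add: contract_def gram_def sum_Times sum_distrib_left sum_distrib_right mult_ac)
  also have "\<dots> = (\<Sum>(j, l)\<in>J \<times> L. \<Sum>(t, s)\<in>D d \<times> D d.
      m j (x1, x2, t) * cnj (r l (t, b)) * (cnj (m j (y1, y2, s)) * r l (s, e)))"
    unfolding split_def by (rule sum.swap)
  also have "\<dots> = gram (J \<times> L) (\<lambda>jl z. cnj (partial_inner d (m (fst jl)) (r (snd jl)) z)) x y"
    unfolding xy gram_def partial_inner_def
    by (simp add: sum_Times cnj_sum sum_distrib_left sum_distrib_right mult_ac)
  finally show ?thesis .
qed

lemma pairing_contract_le_trace:
  assumes M: "psd (D3 d) M" and \<rho>: "psd (D d \<times> D d) \<rho>"
    and K: "\<And>v. Re (qform (D3 d) K v) \<le> c * Re (cinner (D3 d) v v)"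
  shows "Re (pairing (D3 d) K (contract d M \<rho>)) \<le> c * Re (trace (D3 d) (contract d M \<rho>))"
proof -
  have "finite (D3 d)" "finite (D d \<times> D d)" by simp_all
  obtain n :: nat and m where m: "\<forall>x\<in>D3 d. \<forall>y\<in>D3 d. M x y = gram {..<n} m x y"
    using psd_gram_decomposition[OF \<open>finite (D3 d)\<close> M] by blast
  obtain n' :: nat and r where r: "\<forall>x\<in>D d \<times> D d. \<forall>y\<in>D d \<times> D d. \<rho> x y = gram {..<n'} r x y"
    using psd_gram_decomposition[OF \<open>finite (D d \<times> D d)\<close> \<rho>] by blast
  show ?thesis
    using contract_gram[OF m r]
    by (intro pairing_le_trace[OF \<open>finite (D3 d)\<close> _ K, where J = "{..<n} \<times> {..<n'}"
          and w = "\<lambda>jl. partial_inner d (m (fst jl)) (r (snd jl))"]) blast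
qed

lemma trace_contract_povm:
  assumes M: "\<forall>x\<in>D3 d. \<forall>y\<in>D3 d. (\<Sum>i<K. M i x y) = idop x y" and \<rho>: "trace (D d \<times> D d) \<rho> = 1"
  shows "(\<Sum>i<K. trace (D3 d) (contract d (M i) \<rho>)) = of_nat d ^ 2"
proof -
  have "(\<Sum>i<K. trace (D3 d) (contract d (M i) \<rho>)) =
      (\<Sum>x1<d. \<Sum>x2<d. \<Sum>b<d. \<Sum>t<d. \<Sum>s<d. (\<Sum>i<K. M i (x1, x2, t) (x1, x2, s)) * \<rho> (s, b) (t, b))"
    by (simp add: trace_def contract_def sum_Times sum_distrib_right sum.swap[of _ "{..<K}"])
  also have "\<dots> = (\<Sum>x1<d. \<Sum>x2<d. \<Sum>b<d. \<Sum>t<d. \<Sum>s<d. idop t s * \<rho> (s, b) (t, b))"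
    using M by (intro sum.cong refl) (simp add: idop_def)
  also have "\<dots> = (\<Sum>x1<d. \<Sum>x2<d. \<Sum>b<d. \<Sum>t<d. \<rho> (t, b) (t, b))"
    by (simp add: sum_idop_mult)
  also have "\<dots> = (\<Sum>x1<d. \<Sum>x2<d. trace (D d \<times> D d) \<rho>)"
    unfolding trace_def sum_Times by (intro sum.cong refl sum.swap)
  also have "\<dots> = of_nat d ^ 2"
    using \<rho> by (simp add: power2_eq_square)
  finally show ?thesis .
qed

lemma Mext_apply:
  "Mext M (p1, p2, a1, a2, t, b) (q1, q2, c1, c2, s, e) =
    M (a1, a2, t) (c1, c2, s) * (if p1 = q1 then if p2 = q2 then if b = e then 1 else 0 else 0 else 0)"
  by (simp add: Mext_def idop_def)

lemma Omega_apply: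
  "Omega d \<rho> (p1, p2, a1, a2, t, b) (q1, q2, c1, c2, s, e) =
    (if p1 = a1 then if q1 = c1 then if p2 = a2 then if q2 = c2
     then \<rho> (t, b) (s, e) / (of_nat d)\<^sup>2 else 0 else 0 else 0 else 0)"
  by (simp add: Omega_def psi_plus_def power2_eq_square)

lemma mmul_Mext_Omega:
  assumes "p1 < d" "p2 < d" "b < d"
  shows "mmul (Sys6 d) (Mext M) (Omega d \<rho>) (p1, p2, a1, a2, t, b) (q1, q2, c1, c2, s, e) =
    (if q1 = c1 \<and> q2 = c2
     then (\<Sum>s'<d. M (a1, a2, t) (p1, p2, s') * \<rho> (s', b) (s, e)) / (of_nat d)\<^sup>2 else 0)"
  using assms
  by (simp add: mmul_def Sys6_def sum_Times Mext_apply Omega_apply if_zero_mult sum_if_zero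
      sum.delta sum.delta' sum_divide_distrib)

lemma reduce1_Mext_Omega:
  assumes "p < d" "b < d" "q < d"
  shows "reduce d 1 (mmul (Sys6 d) (Mext M) (Omega d \<rho>)) (p, b) (q, e) =
    (\<Sum>r<d. \<Sum>t<d. \<Sum>s<d. M (q, r, t) (p, r, s) * \<rho> (s, b) (t, e)) / (of_nat d)\<^sup>2"
  using assms
  by (simp add: reduce_def mmul_Mext_Omega if_conj_zero sum_if_zero sum.delta sum.delta'
      sum_divide_distrib cong: if_cong)

lemma reduce2_Mext_Omega:
  assumes "p < d" "b < d" "q < d"
  shows "reduce d 2 (mmul (Sys6 d) (Mext M) (Omega d \<rho>)) (p, b) (q, e) =
    (\<Sum>r<d. \<Sum>t<d. \<Sum>s<d. M (r, q, t) (r, p, s) * \<rho> (s, b) (t, e)) / (of_nat d)\<^sup>2"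
  using assms
  by (simp add: reduce_def mmul_Mext_Omega if_conj_zero sum_if_zero sum.delta sum.delta'
      sum_divide_distrib cong: if_cong)

lemma trace_psi_plus_conjB:
  "trace (D d \<times> D d) (mmul (D d \<times> D d) (psi_plus d) (conjB d W Y)) =
    (\<Sum>p<d. \<Sum>q<d. \<Sum>b<d. \<Sum>e<d. W q b * Y (q, b) (p, e) * cnj (W p e)) / of_nat d"
  by (simp add: trace_def mmul_def sum_Times psi_plus_def conjB_def if_conj_zero if_zero_mult
      sum_if_zero sum.delta sum.delta' sum_divide_distrib)

lemma pairing_success_kernel1_contract:
  "pairing (D3 d) (success_kernel1 W) (contract d M \<rho>) =
    (\<Sum>p<d. \<Sum>q<d. \<Sum>b<d. \<Sum>e<d. \<Sum>r<d.
      W q b * (\<Sum>t<d. \<Sum>s<d. M (p, r, t) (q, r, s) * \<rho> (s, b) (t, e)) * cnj (W p e))"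
proof -
  have "pairing (D3 d) (success_kernel1 W) (contract d M \<rho>) =
    (\<Sum>x1<d. \<Sum>x2<d. \<Sum>b<d. \<Sum>y1<d. \<Sum>e<d.
      cnj (W x1 b) * W y1 e * (\<Sum>t<d. \<Sum>s<d. M (x1, x2, t) (y1, x2, s) * \<rho> (s, e) (t, b)))"
    by (simp add: pairing_def success_kernel1_def contract_def sum_Times if_zero_mult sum_if_zero
        sum.delta sum.delta' if_conj_zero)
  also have "\<dots> = (\<Sum>p<d. \<Sum>q<d. \<Sum>b<d. \<Sum>e<d. \<Sum>r<d.
      W q b * (\<Sum>t<d. \<Sum>s<d. M (p, r, t) (q, r, s) * \<rho> (s, b) (t, e)) * cnj (W p e))"
    unfolding sum_nested5_Times
    by (rule sum.reindex_bij_witness[where i = "\<lambda>(p, q, b, e, r). (p, r, e, q, b)"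
          and j = "\<lambda>(x1, x2, b, y1, e). (x1, y1, e, b, x2)"]) (auto simp: mult_ac)
  finally show ?thesis .
qed

lemma pairing_success_kernel2_contract:
  "pairing (D3 d) (success_kernel2 W) (contract d M \<rho>) =
    (\<Sum>p<d. \<Sum>q<d. \<Sum>b<d. \<Sum>e<d. \<Sum>r<d.
      W q b * (\<Sum>t<d. \<Sum>s<d. M (r, p, t) (r, q, s) * \<rho> (s, b) (t, e)) * cnj (W p e))"
proof -
  have "pairing (D3 d) (success_kernel2 W) (contract d M \<rho>) =
    (\<Sum>x1<d. \<Sum>x2<d. \<Sum>b<d. \<Sum>y2<d. \<Sum>e<d.
      cnj (W x2 b) * W y2 e * (\<Sum>t<d. \<Sum>s<d. M (x1, x2, t) (x1, y2, s) * \<rho> (s, e) (t, b)))"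
    by (simp add: pairing_def success_kernel2_def contract_def sum_Times if_zero_mult sum_if_zero
        sum.delta sum.delta' if_conj_zero)
  also have "\<dots> = (\<Sum>p<d. \<Sum>q<d. \<Sum>b<d. \<Sum>e<d. \<Sum>r<d.
      W q b * (\<Sum>t<d. \<Sum>s<d. M (r, p, t) (r, q, s) * \<rho> (s, b) (t, e)) * cnj (W p e))"
    unfolding sum_nested5_Times
    by (rule sum.reindex_bij_witness[where i = "\<lambda>(p, q, b, e, r). (r, p, e, q, b)"
          and j = "\<lambda>(x1, x2, b, y2, e). (x2, y2, e, b, x1)"]) (auto simp: mult_ac)
  finally show ?thesis .
qed

lemma Fj1_eq_pairing:
  "Fj d \<rho> K M U 1 =
    (\<Sum>i<K. pairing (D3 d) (success_kernel1 (U i 1)) (contract d (M i) \<rho>)) / of_nat d ^ 3"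
  unfolding Fj_def trace_psi_plus_conjB pairing_success_kernel1_contract
  by (simp add: reduce1_Mext_Omega[unfolded One_nat_def] sum_divide_distrib sum_distrib_left
      sum_distrib_right power3_eq_cube power2_eq_square mult_ac)

lemma Fj2_eq_pairing:
  "Fj d \<rho> K M U 2 =
    (\<Sum>i<K. pairing (D3 d) (success_kernel2 (U i 2)) (contract d (M i) \<rho>)) / of_nat d ^ 3"
  unfolding Fj_def trace_psi_plus_conjB pairing_success_kernel2_contract
  by (simp add: reduce2_Mext_Omega sum_divide_distrib sum_distrib_left sum_distrib_right
      power3_eq_cube power2_eq_square mult_ac)

theorem mainTheorem4:
  fixes d K :: nat and p :: real
    and \<rho> :: "(nat \<times> nat) op"
    and M :: "nat \<Rightarrow> (nat \<times> nat \<times> nat) op"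
    and U :: "nat \<Rightarrow> nat \<Rightarrow> nat op"
  assumes "d \<ge> 2"
    and "0 \<le> p" and "p \<le> 1"
    and "is_state (D d \<times> D d) \<rho>"
    and "povm (D d \<times> D d \<times> D d) K M"
    and "\<forall>i<K. \<forall>j\<in>{1, 2}. unitary_op (D d) (U i j)"
  shows "p * Re (Fj d \<rho> K M U 1) + (1 - p) * Re (Fj d \<rho> K M U 2)
           \<le> 1 / 2 * (1 + sqrt (1 + 4 * (real d ^ 2 - 1) * (p - 1) * p / real d ^ 2))"
proof -
  have d: "0 < d" using assms(1) by simp
  define c where "c = mix_bound p (1 / d) * d"
  define C where "C i = contract d (M i) \<rho>" for i
  have bound:
    "Re (pairing (D3 d) (mix_kernel p (U i 1) (U i 2)) (C i)) \<le> c * Re (trace (D3 d) (C i))"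
    if "i < K" for i
    unfolding C_def c_def using assms(4-6) that
    by (intro pairing_contract_le_trace qform_mix_kernel_le[OF d assms(2,3)])
      (auto simp: povm_def is_state_def)
  have "p * Re (Fj d \<rho> K M U 1) + (1 - p) * Re (Fj d \<rho> K M U 2) =
      (\<Sum>i<K. Re (pairing (D3 d) (mix_kernel p (U i 1) (U i 2)) (C i))) / d ^ 3"
    unfolding Fj1_eq_pairing Fj2_eq_pairing mix_kernel_def C_def pairing_lincomb
    by (simp add: Re_sum sum.distrib sum_distrib_left add_divide_distrib)
  also have "\<dots> \<le> (\<Sum>i<K. c * Re (trace (D3 d) (C i))) / d ^ 3"
    by (intro divide_right_mono sum_mono bound) auto
  also have "\<dots> = c * Re (\<Sum>i<K. trace (D3 d) (C i)) / d ^ 3"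
    by (simp add: Re_sum sum_distrib_left)
  also have "(\<Sum>i<K. trace (D3 d) (C i)) = of_nat d ^ 2"
    unfolding C_def using assms(4,5)
    by (intro trace_contract_povm) (auto simp: povm_def is_state_def)
  also have "c * Re (of_nat d ^ 2) / d ^ 3 = mix_bound p (1 / d)"
    using d by (simp add: c_def power2_eq_square power3_eq_cube)
  finally show ?thesis unfolding mix_bound_inverse[OF d] .
qed

end
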